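(* Let $\mathcal{C}$ be a process theory with discarding. Suppose that for each system $A$ we are given a system $L_A$ and a causal process $p_A : A \to A \otimes L_A$ (a pre-leak) such that (a) $e_A := (\mathrm{id}_A \otimes \top_{L_A}) \circ p_A : A \to A$ is idempotent, $e_A \circ e_A = e_A$, and (b) the choice is coherent for composites: $L_{A\otimes B} = L_A \otimes L_B$ and $p_{A\otimes B} = (\mathrm{id}_A \otimes \sigma_{L_A, B} \otimes \mathrm{id}_{L_B})\circ (p_A \otimes p_B)$. Then the following defines a new process theory with discarding: the systems are those of $\mathcal{C}$; the processes $A \to B$ are exactly the processes of $\mathcal{C}$ of the form $e_B \circ f \circ e_A$ with $f : A \to B$ a process of $\mathcal{C}$; composition is that of $\mathcal{C}$ (so the identity on $A$ is $e_A$); and discarding is $\top_A$ (which satisfies $\top_A \circ e_A = \top_A$). Moreover, in this new theory, the process $(e_A \otimes e_{L_A}) \circ p_A \circ e_A : A \to A \otimes L_A$ is a leak for $A$, i.e. discarding its $L_A$ output yields the new identity $e_A$.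
   Context: A process theory is a strict symmetric monoidal category: objects are systems, morphisms are processes, $\circ$ is sequential composition, $\otimes$ parallel composition, $I$ the unit, $\sigma_{X,Y}$ the symmetry. A process theory with discarding has, for every system $A$, a distinguished effect $\top_A : A \to I$ with $\top_{A\otimes B} = \top_A \otimes \top_B$. A process $f:A\to B$ is causal if $\top_B \circ f = \top_A$. A leak for $A$ in a process theory whose identity on $A$ is $\mathrm{id}_A$ is a process $l : A \to A\otimes L$ with $(\mathrm{id}_A \otimes \top_L)\circ l = \mathrm{id}_A$. *)

theory Defs
  imports Main
begin

text \<open>A strict symmetric monoidal category ("process theory"), presented concretely:
  objects of type 'o in the carrier Obj, morphisms of type 'm in the carrier Mor,
  src/tgt, sequential composition cmp g f (= g after f), identities idt,
  tensor on objects tobj and on morphisms tmor, unit object I, symmetry swp A B : A*B -> B*A.\<close>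

definition process_theory ::
  "'o set \<Rightarrow> 'm set \<Rightarrow> ('m \<Rightarrow> 'o) \<Rightarrow> ('m \<Rightarrow> 'o) \<Rightarrow> ('m \<Rightarrow> 'm \<Rightarrow> 'm) \<Rightarrow> ('o \<Rightarrow> 'm)
   \<Rightarrow> ('o \<Rightarrow> 'o \<Rightarrow> 'o) \<Rightarrow> ('m \<Rightarrow> 'm \<Rightarrow> 'm) \<Rightarrow> 'o \<Rightarrow> ('o \<Rightarrow> 'o \<Rightarrow> 'm) \<Rightarrow> bool" where
  "process_theory Obj Mor src tgt cmp idt tobj tmor I swp \<longleftrightarrow>
     \<comment> \<open>category\<close>
     (\<forall>f\<in>Mor. src f \<in> Obj \<and> tgt f \<in> Obj) \<and>
     (\<forall>A\<in>Obj. idt A \<in> Mor \<and> src (idt A) = A \<and> tgt (idt A) = A) \<and>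
     (\<forall>f\<in>Mor. \<forall>g\<in>Mor. tgt f = src g \<longrightarrow>
        cmp g f \<in> Mor \<and> src (cmp g f) = src f \<and> tgt (cmp g f) = tgt g) \<and>
     (\<forall>f\<in>Mor. cmp (idt (tgt f)) f = f \<and> cmp f (idt (src f)) = f) \<and>
     (\<forall>f\<in>Mor. \<forall>g\<in>Mor. \<forall>h\<in>Mor. tgt f = src g \<longrightarrow> tgt g = src h \<longrightarrow>
        cmp h (cmp g f) = cmp (cmp h g) f) \<and>
     \<comment> \<open>strict monoidal structure\<close>
     I \<in> Obj \<and>
     (\<forall>A\<in>Obj. \<forall>B\<in>Obj. tobj A B \<in> Obj) \<and>
     (\<forall>A\<in>Obj. \<forall>B\<in>Obj. \<forall>C\<in>Obj. tobj (tobj A B) C = tobj A (tobj B C)) \<and>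
     (\<forall>A\<in>Obj. tobj I A = A \<and> tobj A I = A) \<and>
     (\<forall>f\<in>Mor. \<forall>g\<in>Mor. tmor f g \<in> Mor \<and> src (tmor f g) = tobj (src f) (src g)
        \<and> tgt (tmor f g) = tobj (tgt f) (tgt g)) \<and>
     (\<forall>f\<in>Mor. \<forall>g\<in>Mor. \<forall>h\<in>Mor. tmor (tmor f g) h = tmor f (tmor g h)) \<and>
     (\<forall>f\<in>Mor. tmor (idt I) f = f \<and> tmor f (idt I) = f) \<and>
     (\<forall>A\<in>Obj. \<forall>B\<in>Obj. tmor (idt A) (idt B) = idt (tobj A B)) \<and>
     (\<forall>f\<in>Mor. \<forall>g\<in>Mor. \<forall>f'\<in>Mor. \<forall>g'\<in>Mor. tgt f = src g \<longrightarrow> tgt f' = src g' \<longrightarrow>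
        tmor (cmp g f) (cmp g' f') = cmp (tmor g g') (tmor f f')) \<and>
     \<comment> \<open>symmetry\<close>
     (\<forall>A\<in>Obj. \<forall>B\<in>Obj. swp A B \<in> Mor \<and> src (swp A B) = tobj A B \<and> tgt (swp A B) = tobj B A) \<and>
     (\<forall>f\<in>Mor. \<forall>g\<in>Mor. cmp (swp (tgt f) (tgt g)) (tmor f g) = cmp (tmor g f) (swp (src f) (src g))) \<and>
     (\<forall>A\<in>Obj. \<forall>B\<in>Obj. cmp (swp B A) (swp A B) = idt (tobj A B)) \<and>
     (\<forall>A\<in>Obj. \<forall>B\<in>Obj. \<forall>C\<in>Obj.
        swp A (tobj B C) = cmp (tmor (idt B) (swp A C)) (tmor (swp A B) (idt C)))"

definition process_theory_disc ::
  "'o set \<Rightarrow> 'm set \<Rightarrow> ('m \<Rightarrow> 'o) \<Rightarrow> ('m \<Rightarrow> 'o) \<Rightarrow> ('m \<Rightarrow> 'm \<Rightarrow> 'm) \<Rightarrow> ('o \<Rightarrow> 'm)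
   \<Rightarrow> ('o \<Rightarrow> 'o \<Rightarrow> 'o) \<Rightarrow> ('m \<Rightarrow> 'm \<Rightarrow> 'm) \<Rightarrow> 'o \<Rightarrow> ('o \<Rightarrow> 'o \<Rightarrow> 'm) \<Rightarrow> ('o \<Rightarrow> 'm) \<Rightarrow> bool" where
  "process_theory_disc Obj Mor src tgt cmp idt tobj tmor I swp disc \<longleftrightarrow>
     process_theory Obj Mor src tgt cmp idt tobj tmor I swp \<and>
     (\<forall>A\<in>Obj. disc A \<in> Mor \<and> src (disc A) = A \<and> tgt (disc A) = I) \<and>
     (\<forall>A\<in>Obj. \<forall>B\<in>Obj. disc (tobj A B) = tmor (disc A) (disc B))"

definition causal :: "('m \<Rightarrow> 'o) \<Rightarrow> ('m \<Rightarrow> 'o) \<Rightarrow> ('m \<Rightarrow> 'm \<Rightarrow> 'm) \<Rightarrow> ('o \<Rightarrow> 'm) \<Rightarrow> 'm \<Rightarrow> bool" where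
  "causal src tgt cmp disc f \<longleftrightarrow> cmp (disc (tgt f)) f = disc (src f)"

definition leak ::
  "'m set \<Rightarrow> ('m \<Rightarrow> 'o) \<Rightarrow> ('m \<Rightarrow> 'o) \<Rightarrow> ('m \<Rightarrow> 'm \<Rightarrow> 'm) \<Rightarrow> ('o \<Rightarrow> 'm)
   \<Rightarrow> ('o \<Rightarrow> 'o \<Rightarrow> 'o) \<Rightarrow> ('m \<Rightarrow> 'm \<Rightarrow> 'm) \<Rightarrow> ('o \<Rightarrow> 'm) \<Rightarrow> 'o \<Rightarrow> 'o \<Rightarrow> 'm \<Rightarrow> bool" where
  "leak Mor src tgt cmp idt tobj tmor disc A L l \<longleftrightarrow>
     l \<in> Mor \<and> src l = A \<and> tgt l = tobj A L \<and> cmp (tmor (idt A) (disc L)) l = idt A"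

end

theory Submission
  imports Defs
begin

text \<open>The map f \<mapsto> e_B \<circ> f \<circ> e_A ("sandwich") is idempotent with image the new processes.
  Because e is monoidal it preserves \<otimes>, and it preserves composition of processes commuting
  with e; these include the new processes, identities and symmetries. So every axiom of a strict
  symmetric monoidal category transfers to the sandwiched processes, with identities e_A and the
  sandwiched symmetries. Discarding survives because \<top> \<circ> e = \<top>, and e_I \<circ> \<top>_A = \<top>_A by
  Eckmann--Hilton. For pre-leaks, causality gives \<top> \<circ> e = \<top>, coherence gives
  e_(A\<otimes>B) = e_A \<otimes> e_B since discarding L_A slides through the symmetry, and the leak is the
  sandwich of p_A, whose discarded output is e_A \<circ> e_A \<circ> e_A = e_A.\<close>

locale strict_smc =
  fixes Obj :: "'o set" and Mor :: "'m set"
    and src tgt :: "'m \<Rightarrow> 'o" and cmp :: "'m \<Rightarrow> 'm \<Rightarrow> 'm" and idt :: "'o \<Rightarrow> 'm"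
    and tobj :: "'o \<Rightarrow> 'o \<Rightarrow> 'o" and tmor :: "'m \<Rightarrow> 'm \<Rightarrow> 'm" and I :: 'o
    and swp :: "'o \<Rightarrow> 'o \<Rightarrow> 'm"
  assumes src_Obj [simp]: "f \<in> Mor \<Longrightarrow> src f \<in> Obj"
    and tgt_Obj [simp]: "f \<in> Mor \<Longrightarrow> tgt f \<in> Obj"
    and idt_Mor [simp]: "A \<in> Obj \<Longrightarrow> idt A \<in> Mor"
    and src_idt [simp]: "A \<in> Obj \<Longrightarrow> src (idt A) = A"
    and tgt_idt [simp]: "A \<in> Obj \<Longrightarrow> tgt (idt A) = A"
    and cmp_Mor [simp]: "\<lbrakk>f \<in> Mor; g \<in> Mor; tgt f = src g\<rbrakk> \<Longrightarrow> cmp g f \<in> Mor"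
    and src_cmp [simp]: "\<lbrakk>f \<in> Mor; g \<in> Mor; tgt f = src g\<rbrakk> \<Longrightarrow> src (cmp g f) = src f"
    and tgt_cmp [simp]: "\<lbrakk>f \<in> Mor; g \<in> Mor; tgt f = src g\<rbrakk> \<Longrightarrow> tgt (cmp g f) = tgt g"
    and cmp_idt_left [simp]: "\<lbrakk>f \<in> Mor; tgt f = B\<rbrakk> \<Longrightarrow> cmp (idt B) f = f"
    and cmp_idt_right [simp]: "\<lbrakk>f \<in> Mor; src f = A\<rbrakk> \<Longrightarrow> cmp f (idt A) = f"
    and cmp_assoc: "\<lbrakk>f \<in> Mor; g \<in> Mor; tgt f = src g; h \<in> Mor; tgt g = src h\<rbrakk>
      \<Longrightarrow> cmp h (cmp g f) = cmp (cmp h g) f"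
    and I_Obj [simp]: "I \<in> Obj"
    and tobj_Obj [simp]: "\<lbrakk>A \<in> Obj; B \<in> Obj\<rbrakk> \<Longrightarrow> tobj A B \<in> Obj"
    and tobj_assoc: "\<lbrakk>A \<in> Obj; B \<in> Obj; C \<in> Obj\<rbrakk> \<Longrightarrow> tobj (tobj A B) C = tobj A (tobj B C)"
    and tobj_I_left [simp]: "A \<in> Obj \<Longrightarrow> tobj I A = A"
    and tobj_I_right [simp]: "A \<in> Obj \<Longrightarrow> tobj A I = A"
    and tmor_Mor [simp]: "\<lbrakk>f \<in> Mor; g \<in> Mor\<rbrakk> \<Longrightarrow> tmor f g \<in> Mor"
    and src_tmor [simp]: "\<lbrakk>f \<in> Mor; g \<in> Mor\<rbrakk> \<Longrightarrow> src (tmor f g) = tobj (src f) (src g)"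
    and tgt_tmor [simp]: "\<lbrakk>f \<in> Mor; g \<in> Mor\<rbrakk> \<Longrightarrow> tgt (tmor f g) = tobj (tgt f) (tgt g)"
    and tmor_assoc: "\<lbrakk>f \<in> Mor; g \<in> Mor; h \<in> Mor\<rbrakk> \<Longrightarrow> tmor (tmor f g) h = tmor f (tmor g h)"
    and tmor_idt_I_left [simp]: "f \<in> Mor \<Longrightarrow> tmor (idt I) f = f"
    and tmor_idt_I_right [simp]: "f \<in> Mor \<Longrightarrow> tmor f (idt I) = f"
    and tmor_idt: "\<lbrakk>A \<in> Obj; B \<in> Obj\<rbrakk> \<Longrightarrow> tmor (idt A) (idt B) = idt (tobj A B)"
    and tmor_cmp: "\<lbrakk>f \<in> Mor; g \<in> Mor; tgt f = src g; f' \<in> Mor; g' \<in> Mor; tgt f' = src g'\<rbrakk>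
      \<Longrightarrow> tmor (cmp g f) (cmp g' f') = cmp (tmor g g') (tmor f f')"
    and swp_Mor [simp]: "\<lbrakk>A \<in> Obj; B \<in> Obj\<rbrakk> \<Longrightarrow> swp A B \<in> Mor"
    and src_swp [simp]: "\<lbrakk>A \<in> Obj; B \<in> Obj\<rbrakk> \<Longrightarrow> src (swp A B) = tobj A B"
    and tgt_swp [simp]: "\<lbrakk>A \<in> Obj; B \<in> Obj\<rbrakk> \<Longrightarrow> tgt (swp A B) = tobj B A"
    and swp_natural: "\<lbrakk>f \<in> Mor; g \<in> Mor\<rbrakk>
      \<Longrightarrow> cmp (swp (tgt f) (tgt g)) (tmor f g) = cmp (tmor g f) (swp (src f) (src g))"
    and swp_swp: "\<lbrakk>A \<in> Obj; B \<in> Obj\<rbrakk> \<Longrightarrow> cmp (swp B A) (swp A B) = idt (tobj A B)"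
    and swp_tobj: "\<lbrakk>A \<in> Obj; B \<in> Obj; C \<in> Obj\<rbrakk>
      \<Longrightarrow> swp A (tobj B C) = cmp (tmor (idt B) (swp A C)) (tmor (swp A B) (idt C))"

locale strict_smc_disc = strict_smc +
  fixes disc :: "'o \<Rightarrow> 'm"
  assumes disc_Mor [simp]: "A \<in> Obj \<Longrightarrow> disc A \<in> Mor"
    and src_disc [simp]: "A \<in> Obj \<Longrightarrow> src (disc A) = A"
    and tgt_disc [simp]: "A \<in> Obj \<Longrightarrow> tgt (disc A) = I"
    and disc_tobj: "\<lbrakk>A \<in> Obj; B \<in> Obj\<rbrakk> \<Longrightarrow> disc (tobj A B) = tmor (disc A) (disc B)"

text \<open>The premises of cmp_assoc and tmor_cmp are ordered as in process_theory, so that the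
  following equivalence is a mere normalisation of quantifiers.\<close>

lemma process_theory_disc_iff:
  "process_theory_disc Obj Mor src tgt cmp idt tobj tmor I swp disc
    \<longleftrightarrow> strict_smc_disc Obj Mor src tgt cmp idt tobj tmor I swp disc"
  unfolding process_theory_disc_def process_theory_def strict_smc_disc_def strict_smc_def
    strict_smc_disc_axioms_def
  by (simp add: Ball_def imp_conjR all_conj_distrib conj_assoc)

context strict_smc
begin

lemma cmp_assoc_right:
  "\<lbrakk>f \<in> Mor; g \<in> Mor; tgt f = src g; h \<in> Mor; tgt g = src h\<rbrakk>
    \<Longrightarrow> cmp (cmp h g) f = cmp h (cmp g f)"
  by (simp add: cmp_assoc)

text \<open>The hexagon at (A, I, I) makes swp A I idempotent, and it is invertible.\<close>

lemma swp_I_right [simp]: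
  assumes "A \<in> Obj"
  shows "swp A I = idt A"
proof -
  have swp_idem: "cmp (swp A I) (swp A I) = swp A I"
    using swp_tobj[of A I I] assms by simp
  have "swp A I = cmp (cmp (swp I A) (swp A I)) (swp A I)"
    using swp_swp[of A I] assms by simp
  also have "\<dots> = cmp (swp I A) (swp A I)"
    using assms by (simp add: cmp_assoc_right swp_idem)
  also have "\<dots> = idt A"
    using swp_swp[of A I] assms by simp
  finally show ?thesis .
qed

lemma swp_I_left [simp]:
  assumes "A \<in> Obj"
  shows "swp I A = idt A"
  using swp_swp[of A I] assms by simp

text \<open>Eckmann--Hilton: endomorphisms of the unit commute, as both composites equal their tensor.\<close>
lemma scalar_cmp_commute:
  assumes "a \<in> Mor" "src a = I" "tgt a = I" "b \<in> Mor" "src b = I" "tgt b = I"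
  shows "cmp a b = cmp b a"
proof -
  have "tmor a b = cmp a b"
    using tmor_cmp[of "idt I" a b "idt I"] assms by simp
  moreover have "tmor a b = cmp b a"
    using tmor_cmp[of a "idt I" "idt I" b] assms by simp
  ultimately show ?thesis by simp
qed

lemma effect_swp:
  assumes "g \<in> Mor" "src g = A" "tgt g = I" "B \<in> Obj"
  shows "cmp (tmor (idt B) g) (swp A B) = tmor g (idt B)"
  using swp_natural[of g "idt B"] assms by simp

end

context strict_smc_disc
begin

lemma scalar_cmp_disc:
  assumes a: "a \<in> Mor" "src a = I" "tgt a = I" and disc_a: "cmp (disc I) a = disc I"
    and A: "A \<in> Obj"
  shows "cmp a (disc A) = disc A"
proof -
  have disc_A: "disc A = tmor (disc I) (disc A)"
    using disc_tobj[of I A] A by simp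
  have "cmp a (disc A) = cmp (tmor a (idt I)) (tmor (disc I) (disc A))"
    using a A disc_A by simp
  also have "\<dots> = tmor (cmp a (disc I)) (disc A)"
    using tmor_cmp[of "disc I" a "disc A" "idt I"] a A by simp
  also have "cmp a (disc I) = disc I"
    using scalar_cmp_commute[of a "disc I"] a disc_a by simp
  finally show ?thesis using disc_A by simp
qed

end

locale monoidal_idempotents = strict_smc +
  fixes e :: "'o \<Rightarrow> 'm"
  assumes e_Mor [simp]: "A \<in> Obj \<Longrightarrow> e A \<in> Mor"
    and src_e [simp]: "A \<in> Obj \<Longrightarrow> src (e A) = A"
    and tgt_e [simp]: "A \<in> Obj \<Longrightarrow> tgt (e A) = A"
    and e_idem [simp]: "A \<in> Obj \<Longrightarrow> cmp (e A) (e A) = e A"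
    and e_tobj: "\<lbrakk>A \<in> Obj; B \<in> Obj\<rbrakk> \<Longrightarrow> e (tobj A B) = tmor (e A) (e B)"
begin

definition Mor_e :: "'m set" where
  "Mor_e = {m. \<exists>A\<in>Obj. \<exists>B\<in>Obj. \<exists>f\<in>Mor. src f = A \<and> tgt f = B \<and> m = cmp (e B) (cmp f (e A))}"

definition sandwich :: "'m \<Rightarrow> 'm" where
  "sandwich f = cmp (e (tgt f)) (cmp f (e (src f)))"

definition swp_e :: "'o \<Rightarrow> 'o \<Rightarrow> 'm" where
  "swp_e A B = cmp (e (tobj B A)) (cmp (swp A B) (e (tobj A B)))"

definition e_natural :: "'m \<Rightarrow> bool" where
  "e_natural f \<longleftrightarrow> f \<in> Mor \<and> cmp (e (tgt f)) f = cmp f (e (src f))"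

lemma e_idem_left:
  "\<lbrakk>f \<in> Mor; tgt f = A\<rbrakk> \<Longrightarrow> cmp (e A) (cmp (e A) f) = cmp (e A) f"
  using cmp_assoc[of f "e A" "e A"] tgt_Obj[of f] by simp

lemma sandwich_Mor [simp]: "f \<in> Mor \<Longrightarrow> sandwich f \<in> Mor"
  and src_sandwich [simp]: "f \<in> Mor \<Longrightarrow> src (sandwich f) = src f"
  and tgt_sandwich [simp]: "f \<in> Mor \<Longrightarrow> tgt (sandwich f) = tgt f"
  by (simp_all add: sandwich_def)

lemma sandwich_sandwich [simp]: "f \<in> Mor \<Longrightarrow> sandwich (sandwich f) = sandwich f"
  by (simp add: sandwich_def cmp_assoc_right e_idem_left)

lemma Mor_e_eq_image: "Mor_e = sandwich ` Mor"
  unfolding Mor_e_def sandwich_def by fastforce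

lemma Mor_e_iff: "m \<in> Mor_e \<longleftrightarrow> m \<in> Mor \<and> sandwich m = m"
  unfolding Mor_e_eq_image by (auto intro: image_eqI[of m sandwich m, OF sym])

lemma Mor_e_Mor: "m \<in> Mor_e \<Longrightarrow> m \<in> Mor"
  and sandwich_Mor_e [simp]: "m \<in> Mor_e \<Longrightarrow> sandwich m = m"
  by (simp_all add: Mor_e_iff)

lemma sandwich_in_Mor_e: "f \<in> Mor \<Longrightarrow> sandwich f \<in> Mor_e"
  unfolding Mor_e_eq_image by (rule imageI)

lemma Mor_e_e_left:
  assumes "m \<in> Mor_e"
  shows "cmp (e (tgt m)) m = m"
proof -
  have "cmp (e (tgt m)) (sandwich m) = sandwich m"
    using Mor_e_Mor[OF assms] by (simp add: sandwich_def e_idem_left)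
  then show ?thesis using assms by simp
qed

lemma Mor_e_e_right:
  assumes "m \<in> Mor_e"
  shows "cmp m (e (src m)) = m"
proof -
  have "cmp (sandwich m) (e (src m)) = sandwich m"
    using Mor_e_Mor[OF assms] by (simp add: sandwich_def cmp_assoc_right)
  then show ?thesis using assms by simp
qed

lemma e_natural_Mor_e: "m \<in> Mor_e \<Longrightarrow> e_natural m"
  by (simp add: e_natural_def Mor_e_Mor Mor_e_e_left Mor_e_e_right)

lemma e_natural_idt: "A \<in> Obj \<Longrightarrow> e_natural (idt A)"
  by (simp add: e_natural_def)

lemma e_natural_swp: "\<lbrakk>A \<in> Obj; B \<in> Obj\<rbrakk> \<Longrightarrow> e_natural (swp A B)"
  using swp_natural[of "e A" "e B"] by (simp add: e_natural_def e_tobj)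

lemma e_natural_tmor:
  assumes f: "e_natural f" and g: "e_natural g"
  shows "e_natural (tmor f g)"
proof -
  have "f \<in> Mor" "g \<in> Mor" using f g by (simp_all add: e_natural_def)
  then have "cmp (e (tgt (tmor f g))) (tmor f g) = tmor (cmp (e (tgt f)) f) (cmp (e (tgt g)) g)"
    and "cmp (tmor f g) (e (src (tmor f g))) = tmor (cmp f (e (src f))) (cmp g (e (src g)))"
    by (simp_all add: e_tobj tmor_cmp)
  with f g show ?thesis by (simp add: e_natural_def)
qed

lemma sandwich_e_natural:
  assumes "e_natural f"
  shows "sandwich f = cmp f (e (src f))"
proof -
  have f: "f \<in> Mor" and nat: "cmp (e (tgt f)) f = cmp f (e (src f))"
    using assms by (simp_all add: e_natural_def)
  have "sandwich f = cmp (cmp (e (tgt f)) f) (e (src f))"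
    using f by (simp add: sandwich_def cmp_assoc)
  also have "\<dots> = cmp f (e (src f))"
    using f by (simp add: nat cmp_assoc_right)
  finally show ?thesis .
qed

lemma sandwich_cmp:
  assumes f: "e_natural f" and g: "g \<in> Mor" and fg: "tgt f = src g"
  shows "sandwich (cmp g f) = cmp (sandwich g) (sandwich f)"
proof -
  have fM: "f \<in> Mor" using f by (simp add: e_natural_def)
  have "cmp (e (tgt f)) (sandwich f) = sandwich f"
    using fM by (simp add: sandwich_def e_idem_left)
  then have "cmp (e (src g)) (cmp f (e (src f))) = cmp f (e (src f))"
    using f fg by (simp add: sandwich_e_natural)
  then show ?thesis
    using f fM g fg by (simp add: sandwich_e_natural) (simp add: sandwich_def cmp_assoc_right)
qed

lemma sandwich_tmor:
  assumes "f \<in> Mor" "g \<in> Mor"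
  shows "sandwich (tmor f g) = tmor (sandwich f) (sandwich g)"
  using assms by (simp add: sandwich_def e_tobj tmor_cmp)

lemma sandwich_idt: "A \<in> Obj \<Longrightarrow> sandwich (idt A) = e A"
  by (simp add: sandwich_def)

lemma swp_e_eq_sandwich: "\<lbrakk>A \<in> Obj; B \<in> Obj\<rbrakk> \<Longrightarrow> swp_e A B = sandwich (swp A B)"
  by (simp add: swp_e_def sandwich_def)

lemma e_in_Mor_e: "A \<in> Obj \<Longrightarrow> e A \<in> Mor_e"
  using sandwich_in_Mor_e[of "idt A"] by (simp add: sandwich_idt)

lemma src_swp_e [simp]: "\<lbrakk>A \<in> Obj; B \<in> Obj\<rbrakk> \<Longrightarrow> src (swp_e A B) = tobj A B"
  and tgt_swp_e [simp]: "\<lbrakk>A \<in> Obj; B \<in> Obj\<rbrakk> \<Longrightarrow> tgt (swp_e A B) = tobj B A"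
  by (simp_all add: swp_e_def)

lemma swp_e_in_Mor_e: "\<lbrakk>A \<in> Obj; B \<in> Obj\<rbrakk> \<Longrightarrow> swp_e A B \<in> Mor_e"
  by (simp add: swp_e_eq_sandwich sandwich_in_Mor_e)

lemma cmp_in_Mor_e:
  assumes "f \<in> Mor_e" "g \<in> Mor_e" "tgt f = src g"
  shows "cmp g f \<in> Mor_e"
proof -
  have "sandwich (cmp g f) = cmp g f"
    using assms by (simp add: sandwich_cmp e_natural_Mor_e Mor_e_Mor)
  then show ?thesis
    using sandwich_in_Mor_e[of "cmp g f"] assms by (simp add: Mor_e_Mor)
qed

lemma tmor_in_Mor_e:
  assumes "f \<in> Mor_e" "g \<in> Mor_e"
  shows "tmor f g \<in> Mor_e"
proof -
  have "sandwich (tmor f g) = tmor f g"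
    using assms by (simp add: sandwich_tmor Mor_e_Mor)
  then show ?thesis
    using sandwich_in_Mor_e[of "tmor f g"] assms by (simp add: Mor_e_Mor)
qed

lemma tmor_e_I_left:
  assumes "f \<in> Mor_e"
  shows "tmor (e I) f = f"
  using sandwich_tmor[of "idt I" f] assms by (simp add: sandwich_idt Mor_e_Mor)

lemma tmor_e_I_right:
  assumes "f \<in> Mor_e"
  shows "tmor f (e I) = f"
  using sandwich_tmor[of f "idt I"] assms by (simp add: sandwich_idt Mor_e_Mor)

lemma swp_e_natural:
  assumes f: "f \<in> Mor_e" and g: "g \<in> Mor_e"
  shows "cmp (swp_e (tgt f) (tgt g)) (tmor f g) = cmp (tmor g f) (swp_e (src f) (src g))"
proof -
  have fM: "f \<in> Mor" and gM: "g \<in> Mor" using f g by (simp_all add: Mor_e_Mor)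
  have "cmp (swp_e (tgt f) (tgt g)) (tmor f g) = sandwich (cmp (swp (tgt f) (tgt g)) (tmor f g))"
    using f g fM gM
    by (simp add: swp_e_eq_sandwich sandwich_cmp e_natural_Mor_e tmor_in_Mor_e)
  also have "\<dots> = sandwich (cmp (tmor g f) (swp (src f) (src g)))"
    using fM gM by (simp add: swp_natural)
  also have "\<dots> = cmp (tmor g f) (swp_e (src f) (src g))"
    using f g fM gM
    by (simp add: swp_e_eq_sandwich sandwich_cmp e_natural_swp tmor_in_Mor_e)
  finally show ?thesis .
qed

lemma swp_e_swp_e:
  assumes "A \<in> Obj" "B \<in> Obj"
  shows "cmp (swp_e B A) (swp_e A B) = e (tobj A B)"
  using sandwich_cmp[of "swp A B" "swp B A"] assms
  by (simp add: swp_e_eq_sandwich e_natural_swp swp_swp sandwich_idt)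

lemma swp_e_tobj:
  assumes "A \<in> Obj" "B \<in> Obj" "C \<in> Obj"
  shows "swp_e A (tobj B C) = cmp (tmor (e B) (swp_e A C)) (tmor (swp_e A B) (e C))"
proof -
  have "swp_e A (tobj B C) = sandwich (cmp (tmor (idt B) (swp A C)) (tmor (swp A B) (idt C)))"
    using assms by (simp add: swp_e_eq_sandwich swp_tobj)
  also have "\<dots> = cmp (sandwich (tmor (idt B) (swp A C))) (sandwich (tmor (swp A B) (idt C)))"
    using assms by (intro sandwich_cmp) (simp_all add: e_natural_tmor e_natural_swp e_natural_idt tobj_assoc)
  finally show ?thesis
    using assms by (simp add: sandwich_tmor sandwich_idt swp_e_eq_sandwich)
qed

theorem strict_smc_Mor_e: "strict_smc Obj Mor_e src tgt cmp e tobj tmor I swp_e"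
  by unfold_locales
    (auto simp: Mor_e_Mor e_in_Mor_e cmp_in_Mor_e tmor_in_Mor_e swp_e_in_Mor_e
      Mor_e_e_left Mor_e_e_right tmor_e_I_left tmor_e_I_right e_tobj[symmetric] swp_e_natural swp_e_swp_e swp_e_tobj
      intro: cmp_assoc tobj_assoc tmor_assoc tmor_cmp)

end

locale discarding_idempotents = monoidal_idempotents + strict_smc_disc +
  assumes disc_e [simp]: "A \<in> Obj \<Longrightarrow> cmp (disc A) (e A) = disc A"
begin

lemma disc_in_Mor_e:
  assumes "A \<in> Obj"
  shows "disc A \<in> Mor_e"
proof -
  have "sandwich (disc A) = cmp (e I) (disc A)"
    using assms by (simp add: sandwich_def)
  also have "\<dots> = disc A"
    using assms by (intro scalar_cmp_disc) simp_all
  finally show ?thesis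
    using sandwich_in_Mor_e[of "disc A"] assms by simp
qed

theorem strict_smc_disc_Mor_e: "strict_smc_disc Obj Mor_e src tgt cmp e tobj tmor I swp_e disc"
  by (intro strict_smc_disc.intro strict_smc_Mor_e strict_smc_disc_axioms.intro)
    (simp_all add: disc_in_Mor_e disc_tobj)

end

locale pre_leaks = strict_smc_disc +
  fixes L :: "'o \<Rightarrow> 'o" and p :: "'o \<Rightarrow> 'm" and e :: "'o \<Rightarrow> 'm"
  assumes L_Obj [simp]: "A \<in> Obj \<Longrightarrow> L A \<in> Obj"
    and p_Mor [simp]: "A \<in> Obj \<Longrightarrow> p A \<in> Mor"
    and src_p [simp]: "A \<in> Obj \<Longrightarrow> src (p A) = A"
    and tgt_p [simp]: "A \<in> Obj \<Longrightarrow> tgt (p A) = tobj A (L A)"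
    and p_causal: "A \<in> Obj \<Longrightarrow> cmp (disc (tobj A (L A))) (p A) = disc A"
    and e_def: "e A = cmp (tmor (idt A) (disc (L A))) (p A)"
    and e_idem: "A \<in> Obj \<Longrightarrow> cmp (e A) (e A) = e A"
    and L_tobj: "\<lbrakk>A \<in> Obj; B \<in> Obj\<rbrakk> \<Longrightarrow> L (tobj A B) = tobj (L A) (L B)"
    and p_tobj: "\<lbrakk>A \<in> Obj; B \<in> Obj\<rbrakk>
      \<Longrightarrow> p (tobj A B) = cmp (tmor (tmor (idt A) (swp (L A) B)) (idt (L B))) (tmor (p A) (p B))"
begin

lemma pre_leak_disc_e:
  assumes "A \<in> Obj"
  shows "cmp (disc A) (e A) = disc A"
proof -
  have "cmp (disc A) (tmor (idt A) (disc (L A))) = disc (tobj A (L A))"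
    using tmor_cmp[of "idt A" "disc A" "disc (L A)" "idt I"] assms by (simp add: disc_tobj)
  then show ?thesis
    using assms by (simp add: e_def cmp_assoc p_causal)
qed

text \<open>Discarding L_A commutes past the symmetry (effect_swp), which undoes the coherence twist.\<close>

lemma pre_leak_e_tobj:
  assumes A: "A \<in> Obj" and B: "B \<in> Obj"
  shows "e (tobj A B) = tmor (e A) (e B)"
proof -
  let ?D = "tmor (tmor (idt A) (disc (L A))) (tmor (idt B) (disc (L B)))"
  have "cmp (tmor (idt (tobj A B)) (disc (L (tobj A B)))) (tmor (tmor (idt A) (swp (L A) B)) (idt (L B)))
      = cmp (tmor (idt A) (tmor (tmor (idt B) (disc (L A))) (disc (L B))))
          (tmor (idt A) (tmor (swp (L A) B) (idt (L B))))"
    using A B by (simp add: L_tobj disc_tobj tmor_idt[symmetric] tmor_assoc)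
  also have "\<dots> = tmor (idt A) (tmor (cmp (tmor (idt B) (disc (L A))) (swp (L A) B)) (disc (L B)))"
    using A B by (simp add: tmor_cmp[symmetric])
  also have "\<dots> = ?D"
    using A B by (simp add: effect_swp tmor_assoc)
  finally have D: "cmp (tmor (idt (tobj A B)) (disc (L (tobj A B))))
      (tmor (tmor (idt A) (swp (L A) B)) (idt (L B))) = ?D" .
  have "e (tobj A B) = cmp (tmor (idt (tobj A B)) (disc (L (tobj A B))))
      (cmp (tmor (tmor (idt A) (swp (L A) B)) (idt (L B))) (tmor (p A) (p B)))"
    using A B by (simp add: e_def p_tobj)
  also have "\<dots> = cmp ?D (tmor (p A) (p B))"
    unfolding D[symmetric] using A B by (intro cmp_assoc) (simp_all add: L_tobj tobj_assoc)
  also have "\<dots> = tmor (e A) (e B)"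
    using A B by (simp add: e_def tmor_cmp)
  finally show ?thesis .
qed

end

sublocale pre_leaks \<subseteq> discarding_idempotents Obj Mor src tgt cmp idt tobj tmor I swp e disc
  by unfold_locales (use e_idem pre_leak_e_tobj pre_leak_disc_e in \<open>simp_all add: e_def\<close>)

context pre_leaks
begin

lemma leak_sandwich_p:
  assumes A: "A \<in> Obj"
  shows "leak Mor_e src tgt cmp e tobj tmor disc A (L A) (cmp (tmor (e A) (e (L A))) (cmp (p A) (e A)))"
proof -
  let ?l = "cmp (tmor (e A) (e (L A))) (cmp (p A) (e A))"
  have l: "?l = sandwich (p A)"
    using A by (simp add: sandwich_def e_tobj)
  have absorb: "cmp (tmor (e A) (disc (L A))) (e (tobj A (L A))) = tmor (e A) (disc (L A))"
    using A by (simp add: e_tobj tmor_cmp[symmetric])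
  have factor: "tmor (e A) (disc (L A)) = cmp (e A) (tmor (idt A) (disc (L A)))"
    using tmor_cmp[of "idt A" "e A" "disc (L A)" "idt I"] A by simp
  have "cmp (tmor (e A) (disc (L A))) ?l = cmp (tmor (e A) (disc (L A))) (cmp (p A) (e A))"
    using A by (simp add: l sandwich_def cmp_assoc absorb)
  also have "\<dots> = cmp (e A) (cmp (tmor (idt A) (disc (L A))) (cmp (p A) (e A)))"
    using A by (simp add: factor cmp_assoc_right)
  also have "\<dots> = cmp (e A) (cmp (e A) (e A))"
    using A by (simp add: cmp_assoc flip: e_def)
  also have "\<dots> = e A"
    using A by simp
  finally show ?thesis
    using A l by (simp add: leak_def sandwich_in_Mor_e)
qed

end

theorem theorem1:
  fixes Obj :: "'o set" and Mor :: "'m set"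
    and src tgt :: "'m \<Rightarrow> 'o" and cmp :: "'m \<Rightarrow> 'm \<Rightarrow> 'm" and idt :: "'o \<Rightarrow> 'm"
    and tobj :: "'o \<Rightarrow> 'o \<Rightarrow> 'o" and tmor :: "'m \<Rightarrow> 'm \<Rightarrow> 'm" and I :: 'o
    and swp :: "'o \<Rightarrow> 'o \<Rightarrow> 'm" and disc :: "'o \<Rightarrow> 'm"
    and L :: "'o \<Rightarrow> 'o" and p :: "'o \<Rightarrow> 'm" and e :: "'o \<Rightarrow> 'm"
  assumes C: "process_theory_disc Obj Mor src tgt cmp idt tobj tmor I swp disc"
    and L_obj: "\<forall>A\<in>Obj. L A \<in> Obj"
    and p_typ: "\<forall>A\<in>Obj. p A \<in> Mor \<and> src (p A) = A \<and> tgt (p A) = tobj A (L A)"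
    and p_causal: "\<forall>A\<in>Obj. causal src tgt cmp disc (p A)"
    and e_def: "\<forall>A. e A = cmp (tmor (idt A) (disc (L A))) (p A)"
    and e_idem: "\<forall>A\<in>Obj. cmp (e A) (e A) = e A"
    and L_tensor: "\<forall>A\<in>Obj. \<forall>B\<in>Obj. L (tobj A B) = tobj (L A) (L B)"
    and p_tensor: "\<forall>A\<in>Obj. \<forall>B\<in>Obj.
        p (tobj A B) = cmp (tmor (tmor (idt A) (swp (L A) B)) (idt (L B))) (tmor (p A) (p B))"
  shows "process_theory_disc Obj
           {m. \<exists>A\<in>Obj. \<exists>B\<in>Obj. \<exists>f\<in>Mor. src f = A \<and> tgt f = B \<and> m = cmp (e B) (cmp f (e A))}
           src tgt cmp e tobj tmor I
           (\<lambda>A B. cmp (e (tobj B A)) (cmp (swp A B) (e (tobj A B))))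
           disc
       \<and> (\<forall>A\<in>Obj. cmp (disc A) (e A) = disc A)
       \<and> (\<forall>A\<in>Obj. leak
           {m. \<exists>A\<in>Obj. \<exists>B\<in>Obj. \<exists>f\<in>Mor. src f = A \<and> tgt f = B \<and> m = cmp (e B) (cmp f (e A))}
           src tgt cmp e tobj tmor disc A (L A)
           (cmp (tmor (e A) (e (L A))) (cmp (p A) (e A))))"
proof -
  interpret strict_smc_disc Obj Mor src tgt cmp idt tobj tmor I swp disc
    using C by (simp add: process_theory_disc_iff)
  interpret pre_leaks Obj Mor src tgt cmp idt tobj tmor I swp disc L p e
    using assms by unfold_locales (auto simp: causal_def)
  show ?thesis
    using strict_smc_disc_Mor_e leak_sandwich_p
    by (simp add: process_theory_disc_iff Mor_e_def swp_e_def[abs_def])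
qed

end
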